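(* Let $(\mathcal V,\mathcal W,\lambda)$ be a FTvN system with center $C$. Then $C=\{u\in\mathcal V:[u]=\{u\}\}$.
   Context: A Fan-Theobald-von Neumann (FTvN) system is a triple $(\mathcal V,\mathcal W,\lambda)$ where $\mathcal V,\mathcal W$ are real inner product spaces and $\lambda:\mathcal V\to\mathcal W$ is a map such that: (A1) $\|\lambda(x)\|=\|x\|$ for all $x$; (A2) $\langle x,y\rangle\le\langle\lambda(x),\lambda(y)\rangle$ for all $x,y$; (A3) for every $c\in\mathcal V$ and $q\in\lambda(\mathcal V)$ there exists $x$ with $\lambda(x)=q$ and $\langle c,x\rangle=\langle\lambda(c),\lambda(x)\rangle$. The $\lambda$-orbit of $u$ is $[u]=\{x:\lambda(x)=\lambda(u)\}$. Elements $x,y$ commute if $\langle x,y\rangle=\langle\lambda(x),\lambda(y)\rangle$. The center $C$ is the set of elements of $\mathcal V$ commuting with every element of $\mathcal V$. *)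

theory Defs
  imports "HOL-Analysis.Analysis"
begin

definition FTvN_system :: "('v::real_inner \<Rightarrow> 'w::real_inner) \<Rightarrow> bool" where
  "FTvN_system lam \<longleftrightarrow>
     (\<forall>x. norm (lam x) = norm x) \<and>
     (\<forall>x y. inner x y \<le> inner (lam x) (lam y)) \<and>
     (\<forall>c q. q \<in> range lam \<longrightarrow> (\<exists>x. lam x = q \<and> inner c x = inner (lam c) (lam x)))"

definition lambda_orbit :: "('v \<Rightarrow> 'w) \<Rightarrow> 'v \<Rightarrow> 'v set" where
  "lambda_orbit lam u = {x. lam x = lam u}"

definition commute :: "('v::real_inner \<Rightarrow> 'w::real_inner) \<Rightarrow> 'v \<Rightarrow> 'v \<Rightarrow> bool" where
  "commute lam x y \<longleftrightarrow> inner x y = inner (lam x) (lam y)"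

definition center :: "('v::real_inner \<Rightarrow> 'w::real_inner) \<Rightarrow> 'v set" where
  "center lam = {c. \<forall>x. commute lam c x}"

end

theory Submission
  imports Defs
begin

text \<open>A central element u commutes with every point of its orbit, so u and any x with
  \<open>lam x = lam u\<close> have the same norm and \<open>inner u x = norm u ^ 2\<close>, which forces \<open>x = u\<close>.
  Conversely, axiom (A3) provides, for each c, a point of the orbit of u commuting with c;
  if that orbit is \<open>{u}\<close>, the point is u itself.\<close>

lemma FTvN_system_norm_eq:
  "FTvN_system lam \<Longrightarrow> norm (lam x) = norm x"
  unfolding FTvN_system_def by blast

lemma FTvN_system_commuting_preimage:
  assumes "FTvN_system lam"
  obtains x where "lam x = lam u" and "commute lam c x"
  using assms unfolding FTvN_system_def commute_def by blast

lemma commute_sym: "commute lam x y \<longleftrightarrow> commute lam y x"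
  unfolding commute_def by (simp add: inner_commute)

lemma eq_if_norm_eq_inner_eq_norm_sq:
  fixes u x :: "'a::real_inner"
  assumes "norm x = norm u" and "inner u x = (norm u)\<^sup>2"
  shows "x = u"
  using assms by (metis dot_square_norm vector_eq)

lemma FTvN_system_orbit_of_center:
  assumes sys: "FTvN_system lam" and "u \<in> center lam"
  shows "lambda_orbit lam u = {u}"
proof -
  have "x = u" if orbit: "lam x = lam u" for x
  proof (rule eq_if_norm_eq_inner_eq_norm_sq)
    show "norm x = norm u"
      by (metis sys orbit FTvN_system_norm_eq)
    have "inner u x = inner (lam u) (lam u)"
      using \<open>u \<in> center lam\<close> orbit unfolding center_def commute_def by simp
    then show "inner u x = (norm u)\<^sup>2"
      by (simp add: sys FTvN_system_norm_eq flip: power2_norm_eq_inner)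
  qed
  then show ?thesis
    unfolding lambda_orbit_def by auto
qed

lemma FTvN_system_center_if_orbit_singleton:
  assumes sys: "FTvN_system lam" and orbit: "lambda_orbit lam u = {u}"
  shows "u \<in> center lam"
proof -
  have "commute lam u c" for c
  proof -
    obtain x where "lam x = lam u" and "commute lam c x"
      using sys by (rule FTvN_system_commuting_preimage)
    moreover from \<open>lam x = lam u\<close> have "x = u"
      using orbit unfolding lambda_orbit_def by blast
    ultimately show ?thesis
      by (simp add: commute_sym)
  qed
  then show ?thesis
    unfolding center_def by blast
qed

theorem proposition6p3:
  fixes lam :: "'v::real_inner \<Rightarrow> 'w::real_inner"
  assumes "FTvN_system lam"
  shows "center lam = {u. lambda_orbit lam u = {u}}"
  using FTvN_system_orbit_of_center[OF assms] FTvN_system_center_if_orbit_singleton[OF assms]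
  by blast

end
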